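(* Let $0<\eta<2^{-11}$. Every interval $I\subseteq\mathbb{R}$ of length $7\eta$ contains a sub-interval $J\subseteq I$ of length $\eta$ such that $|\mathrm{Re}(H(x))|\ge \eta^3/2^7$ for every $x\in J$. Moreover, if $I=[a,a+7\eta]$ then one can take $J=[a+j\eta,a+(j+1)\eta]$ for some $j\in\{0,1,\dots,6\}$.
   Context: Rudin–Shapiro polynomials: $P_0(z)=Q_0(z)=1$ and for $s\ge0$, $P_{s+1}(z)=P_s(z)+z^{2^s}Q_s(z)$, $Q_{s+1}(z)=P_s(z)-z^{2^s}Q_s(z)$. Let $t$ be an odd positive integer and $T:=2^{t+10}$. For $x\in\mathbb{R}$ define $\alpha(x):=2^{-(t+1)/2}P_t(e^{ix/T})$, $\beta(x):=2^{-(t+1)/2}Q_t(e^{ix/T})$, and $H(x):=e^{ix}\alpha(x)+e^{2ix}\beta(x)$. *)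

theory Defs
  imports "HOL-Analysis.Analysis"
begin

text \<open>Rudin--Shapiro polynomials, evaluated as functions: RS s z = (P_s(z), Q_s(z)).\<close>
fun RS :: "nat \<Rightarrow> complex \<Rightarrow> complex \<times> complex" where
  "RS 0 z = (1, 1)"
| "RS (Suc s) z = (fst (RS s z) + z ^ (2 ^ s) * snd (RS s z),
                   fst (RS s z) - z ^ (2 ^ s) * snd (RS s z))"

definition RS_P :: "nat \<Rightarrow> complex \<Rightarrow> complex" where
  "RS_P s z = fst (RS s z)"

definition RS_Q :: "nat \<Rightarrow> complex \<Rightarrow> complex" where
  "RS_Q s z = snd (RS s z)"

definition Tpar :: "nat \<Rightarrow> real" where
  "Tpar t = 2 ^ (t + 10)"

definition alpha :: "nat \<Rightarrow> real \<Rightarrow> complex" where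
  "alpha t x = complex_of_real (2 powr (- (real t + 1) / 2)) * RS_P t (cis (x / Tpar t))"

definition beta :: "nat \<Rightarrow> real \<Rightarrow> complex" where
  "beta t x = complex_of_real (2 powr (- (real t + 1) / 2)) * RS_Q t (cis (x / Tpar t))"

definition H :: "nat \<Rightarrow> real \<Rightarrow> complex" where
  "H t x = cis x * alpha t x + cis (2 * x) * beta t x"

definition ivl_length :: "real set \<Rightarrow> real" where
  "ivl_length I = Sup I - Inf I"

end

theory Submission
  imports Defs "HOL-Complex_Analysis.Cauchy_Integral_Formula"
begin

text \<open>
  By the Rudin--Shapiro identity \<open>|P\<^sub>t|\<^sup>2 + |Q\<^sub>t|\<^sup>2 = 2\<^sup>t\<^sup>+\<^sup>1\<close> on the unit circle,
  \<open>|\<alpha>(x)|\<^sup>2 + |\<beta>(x)|\<^sup>2 = 1\<close> for real \<open>x\<close>. Because of the large scale \<open>T\<close>, \<open>\<alpha>\<close> and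
  \<open>\<beta>\<close> extend to entire functions bounded by 3 on the strip \<open>|Im w| \<le> 1024\<close>, so by Cauchy's
  estimate they are \<open>3/512\<close>-Lipschitz near the real axis. Hence, near a real point \<open>a\<close>,
  \<open>H\<close> is within \<open>1/12\<close> of the two-frequency sum \<open>G(w) = \<alpha>(a) e\<^sup>i\<^sup>w + \<beta>(a) e\<^sup>2\<^sup>i\<^sup>w\<close> on a
  complex neighbourhood of radius about 1, and Cauchy's estimate again shows that the
  \<open>k\<close>-th derivatives of \<open>H\<close> and \<open>G\<close> differ by at most \<open>k!/12\<close> at real points near \<open>a\<close>.

  If \<open>|Re H|\<close> were below \<open>\<eta>\<^sup>3/2\<^sup>7\<close> somewhere in each of the intervals
  \<open>[a + j\<eta>, a + (j+1)\<eta>]\<close>, \<open>j = 0, 2, 4, 6\<close>, then divided differences at these four points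
  would make the \<open>k\<close>-th derivative of \<open>Re H\<close> at most \<open>(2/\<eta>)\<^sup>k \<eta>\<^sup>3/2\<^sup>7\<close> somewhere within
  \<open>7\<eta>\<close> of \<open>a\<close>, for every \<open>k \<le> 3\<close>. Transferred to \<open>a\<close>, this makes the four numbers
  \<open>Re(u + v)\<close>, \<open>Im(u + 2v)\<close>, \<open>Re(u + 4v)\<close>, \<open>Im(u + 8v)\<close> small, where \<open>u = \<alpha>(a) e\<^sup>i\<^sup>a\<close> and
  \<open>v = \<beta>(a) e\<^sup>2\<^sup>i\<^sup>a\<close>; this is incompatible with \<open>|u|\<^sup>2 + |v|\<^sup>2 = 1\<close>.
\<close>

lemma exp_2_le_9: "exp (2::real) \<le> 9"
proof -
  have "exp (2::real) = exp 1 ^ 2"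
    by (simp flip: exp_of_nat_mult)
  also have "\<dots> \<le> 3 ^ 2"
    using exp_le by (intro power_mono) auto
  finally show ?thesis
    by simp
qed

lemma norm_le_if_norm_sq_add_le:
  fixes a b :: "'a::real_normed_vector"
  assumes "(norm a)\<^sup>2 + (norm b)\<^sup>2 \<le> c\<^sup>2" and "0 \<le> c"
  shows "norm a \<le> c" and "norm b \<le> c"
proof -
  have "(norm a)\<^sup>2 \<le> c\<^sup>2" "(norm b)\<^sup>2 \<le> c\<^sup>2"
    using assms(1) zero_le_power2[of "norm a"] zero_le_power2[of "norm b"] by linarith+
  then show "norm a \<le> c" "norm b \<le> c"
    using assms(2) by (auto intro: power2_le_imp_le)
qed

lemma abs_divide_le:
  fixes u q :: real
  assumes "\<bar>u\<bar> \<le> \<epsilon>" "0 < m" "m \<le> \<bar>q\<bar>"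
  shows "\<bar>u / q\<bar> \<le> \<epsilon> / m"
  unfolding abs_divide using assms by (intro frac_le) (auto intro: order_trans[OF abs_ge_zero])

lemma has_real_derivative_Re_of_real:
  assumes "(f has_field_derivative f') (at (of_real x))"
  shows "((\<lambda>x. Re (f (of_real x))) has_real_derivative Re f') (at x)"
proof -
  have "((\<lambda>x. f (of_real x)) has_derivative (\<lambda>h. h *\<^sub>R f')) (at x)"
    using has_vector_derivative_real_field[OF assms] by (simp add: has_vector_derivative_def)
  then have "((\<lambda>x. Re (f (of_real x))) has_derivative (\<lambda>h. Re (h *\<^sub>R f'))) (at x)"
    by (rule has_derivative_Re)
  moreover have "(\<lambda>h. Re (h *\<^sub>R f')) = (*) (Re f')"
    by (auto simp: fun_eq_iff)
  ultimately show ?thesis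
    by (simp add: has_field_derivative_def)
qed

lemma Rolle_has_real_derivative:
  fixes h h' :: "real \<Rightarrow> real"
  assumes "a < b" and "\<And>x. (h has_real_derivative h' x) (at x)" and "h a = h b"
  shows "\<exists>z. a < z \<and> z < b \<and> h' z = 0"
  using MVT2[of a b h h'] assms by auto

lemma Rolle_second_deriv:
  fixes h0 h1 h2 :: "real \<Rightarrow> real"
  assumes lt: "x0 < x1" "x1 < x2"
    and h01: "\<And>x. (h0 has_real_derivative h1 x) (at x)"
    and h12: "\<And>x. (h1 has_real_derivative h2 x) (at x)"
    and zero: "h0 x0 = 0" "h0 x1 = 0" "h0 x2 = 0"
  shows "\<exists>\<xi>. x0 < \<xi> \<and> \<xi> < x2 \<and> h2 \<xi> = 0"
proof -
  obtain y1 where y1: "x0 < y1" "y1 < x1" "h1 y1 = 0"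
    using Rolle_has_real_derivative[OF lt(1) h01] zero by auto
  obtain y2 where y2: "x1 < y2" "y2 < x2" "h1 y2 = 0"
    using Rolle_has_real_derivative[OF lt(2) h01] zero by auto
  obtain \<xi> where "y1 < \<xi>" "\<xi> < y2" "h2 \<xi> = 0"
    using Rolle_has_real_derivative[of y1 y2 h1 h2] h12 y1 y2 by auto
  then show ?thesis
    using y1 y2 by (intro exI[of _ \<xi>]) auto
qed

lemma Rolle_third_deriv:
  fixes h0 h1 h2 h3 :: "real \<Rightarrow> real"
  assumes lt: "x0 < x1" "x1 < x2" "x2 < x3"
    and h01: "\<And>x. (h0 has_real_derivative h1 x) (at x)"
    and h12: "\<And>x. (h1 has_real_derivative h2 x) (at x)"
    and h23: "\<And>x. (h2 has_real_derivative h3 x) (at x)"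
    and zero: "h0 x0 = 0" "h0 x1 = 0" "h0 x2 = 0" "h0 x3 = 0"
  shows "\<exists>\<xi>. x0 < \<xi> \<and> \<xi> < x3 \<and> h3 \<xi> = 0"
proof -
  obtain y1 where y1: "x0 < y1" "y1 < x1" "h1 y1 = 0"
    using Rolle_has_real_derivative[OF lt(1) h01] zero by auto
  obtain y2 where y2: "x1 < y2" "y2 < x2" "h1 y2 = 0"
    using Rolle_has_real_derivative[OF lt(2) h01] zero by auto
  obtain y3 where y3: "x2 < y3" "y3 < x3" "h1 y3 = 0"
    using Rolle_has_real_derivative[OF lt(3) h01] zero by auto
  obtain \<xi> where "y1 < \<xi>" "\<xi> < y3" "h3 \<xi> = 0"
    using Rolle_second_deriv[of y1 y2 y3 h1 h2 h3] h12 h23 y1 y2 y3 by auto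
  then show ?thesis
    using y1 y3 by (intro exI[of _ \<xi>]) auto
qed

lemma holomorphic_lipschitz_on_cball:
  fixes f :: "complex \<Rightarrow> complex"
  assumes holf: "f holomorphic_on S" and "open S" and sub: "cball c (\<rho> + r) \<subseteq> S" and "0 < r"
    and bound: "\<And>w. w \<in> cball c (\<rho> + r) \<Longrightarrow> cmod (f w) \<le> M"
    and "w \<in> cball c \<rho>" "y \<in> cball c \<rho>"
  shows "cmod (f w - f y) \<le> M / r * cmod (w - y)"
proof (rule field_differentiable_bound[of "cball c \<rho>" f "deriv f"])
  fix z assume z: "z \<in> cball c \<rho>"
  have ball_sub: "cball z r \<subseteq> cball c (\<rho> + r)"
  proof
    fix x assume "x \<in> cball z r"
    then show "x \<in> cball c (\<rho> + r)"
      using z dist_triangle[of c x z] by simp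
  qed
  have "z \<in> S"
    using ball_sub sub \<open>0 < r\<close> by (meson centre_in_cball less_imp_le subsetD)
  with holf \<open>open S\<close> show "(f has_field_derivative deriv f z) (at z within cball c \<rho>)"
    by (rule holomorphic_derivI)
  have "cmod ((deriv ^^ 1) f z) \<le> fact 1 * M / r ^ 1"
  proof (rule Cauchy_inequality)
    show "f holomorphic_on ball z r"
      using holf ball_sub sub by (meson ball_subset_cball holomorphic_on_subset order_trans)
    show "continuous_on (cball z r) f"
      using holomorphic_on_imp_continuous_on[OF holf] ball_sub sub by (meson continuous_on_subset order_trans)
  qed (use bound ball_sub \<open>0 < r\<close> in \<open>auto simp: dist_norm\<close>)
  then show "cmod (deriv f z) \<le> M / r"
    by simp
qed (use assms in auto)

section \<open>Divided differences\<close>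

definition divided_diff2 :: "(real \<Rightarrow> real) \<Rightarrow> real \<Rightarrow> real \<Rightarrow> real \<Rightarrow> real" where
  "divided_diff2 f x0 x1 x2 =
     f x0 / ((x0 - x1) * (x0 - x2)) + f x1 / ((x1 - x0) * (x1 - x2)) + f x2 / ((x2 - x0) * (x2 - x1))"

definition divided_diff3 :: "(real \<Rightarrow> real) \<Rightarrow> real \<Rightarrow> real \<Rightarrow> real \<Rightarrow> real \<Rightarrow> real" where
  "divided_diff3 f x0 x1 x2 x3 =
       f x0 / ((x0 - x1) * (x0 - x2) * (x0 - x3)) + f x1 / ((x1 - x0) * (x1 - x2) * (x1 - x3))
     + f x2 / ((x2 - x0) * (x2 - x1) * (x2 - x3)) + f x3 / ((x3 - x0) * (x3 - x1) * (x3 - x2))"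

text \<open>Both mean value theorems apply the iterated Rolle theorem to \<open>g 0\<close> minus its
  Lagrange interpolation polynomial, whose leading coefficient is the divided difference.\<close>

lemma divided_diff2_mean_value:
  fixes g :: "nat \<Rightarrow> real \<Rightarrow> real"
  assumes g: "\<And>k x. (g k has_real_derivative g (Suc k) x) (at x)"
    and lt: "x0 < x1" "x1 < x2"
  shows "\<exists>\<xi>. x0 < \<xi> \<and> \<xi> < x2 \<and> g 2 \<xi> = 2 * divided_diff2 (g 0) x0 x1 x2"
proof -
  define p where "p a b x = (x - a) * (x - b)" for a b x :: real
  define p' where "p' a b x = 2 * x - a - b" for a b x :: real
  have p: "(p a b has_real_derivative p' a b x) (at x)" and p': "(p' a b has_real_derivative 2) (at x)" for a b x
    unfolding p_def[abs_def] p'_def[abs_def] by (auto intro!: derivative_eq_intros simp: algebra_simps)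
  define c0 where "c0 = g 0 x0 / ((x0 - x1) * (x0 - x2))"
  define c1 where "c1 = g 0 x1 / ((x1 - x0) * (x1 - x2))"
  define c2 where "c2 = g 0 x2 / ((x2 - x0) * (x2 - x1))"
  define h0 where "h0 x = g 0 x - (c0 * p x1 x2 x + c1 * p x0 x2 x + c2 * p x0 x1 x)" for x
  define h1 where "h1 x = g 1 x - (c0 * p' x1 x2 x + c1 * p' x0 x2 x + c2 * p' x0 x1 x)" for x
  define h2 where "h2 x = g 2 x - (c0 * 2 + c1 * 2 + c2 * 2)" for x
  have g01: "(g 0 has_real_derivative g 1 x) (at x)" and g12: "(g 1 has_real_derivative g 2 x) (at x)" for x
    using g[of 0 x] g[of 1 x] by (simp_all add: eval_nat_numeral)
  have h01: "(h0 has_real_derivative h1 x) (at x)" for x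
    unfolding h0_def[abs_def] h1_def by (intro DERIV_diff DERIV_add DERIV_cmult g01 p)
  have h12: "(h1 has_real_derivative h2 x) (at x)" for x
    unfolding h1_def[abs_def] h2_def by (intro DERIV_diff DERIV_add DERIV_cmult g12 p')
  have "h0 x0 = 0" "h0 x1 = 0" "h0 x2 = 0"
    using lt by (simp_all add: h0_def p_def c0_def c1_def c2_def)
  then obtain \<xi> where "x0 < \<xi>" "\<xi> < x2" "h2 \<xi> = 0"
    using Rolle_second_deriv[OF lt h01 h12] by blast
  then show ?thesis
    by (intro exI[of _ \<xi>]) (auto simp: h2_def divided_diff2_def c0_def c1_def c2_def algebra_simps)
qed

lemma divided_diff3_mean_value:
  fixes g :: "nat \<Rightarrow> real \<Rightarrow> real"
  assumes g: "\<And>k x. (g k has_real_derivative g (Suc k) x) (at x)"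
    and lt: "x0 < x1" "x1 < x2" "x2 < x3"
  shows "\<exists>\<xi>. x0 < \<xi> \<and> \<xi> < x3 \<and> g 3 \<xi> = 6 * divided_diff3 (g 0) x0 x1 x2 x3"
proof -
  define p where "p a b c x = (x - a) * (x - b) * (x - c)" for a b c x :: real
  define p' where "p' a b c x = (x - b) * (x - c) + (x - a) * (x - c) + (x - a) * (x - b)" for a b c x :: real
  define p'' where "p'' a b c x = 6 * x - 2 * (a + b + c)" for a b c x :: real
  have p: "(p a b c has_real_derivative p' a b c x) (at x)"
    and p': "(p' a b c has_real_derivative p'' a b c x) (at x)"
    and p'': "(p'' a b c has_real_derivative 6) (at x)" for a b c x
    unfolding p_def[abs_def] p'_def[abs_def] p''_def[abs_def]
    by (auto intro!: derivative_eq_intros simp: algebra_simps)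
  define c0 where "c0 = g 0 x0 / ((x0 - x1) * (x0 - x2) * (x0 - x3))"
  define c1 where "c1 = g 0 x1 / ((x1 - x0) * (x1 - x2) * (x1 - x3))"
  define c2 where "c2 = g 0 x2 / ((x2 - x0) * (x2 - x1) * (x2 - x3))"
  define c3 where "c3 = g 0 x3 / ((x3 - x0) * (x3 - x1) * (x3 - x2))"
  define h0 where "h0 x = g 0 x - (c0 * p x1 x2 x3 x + c1 * p x0 x2 x3 x + c2 * p x0 x1 x3 x + c3 * p x0 x1 x2 x)" for x
  define h1 where "h1 x = g 1 x - (c0 * p' x1 x2 x3 x + c1 * p' x0 x2 x3 x + c2 * p' x0 x1 x3 x + c3 * p' x0 x1 x2 x)" for x
  define h2 where "h2 x = g 2 x - (c0 * p'' x1 x2 x3 x + c1 * p'' x0 x2 x3 x + c2 * p'' x0 x1 x3 x + c3 * p'' x0 x1 x2 x)" for x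
  define h3 where "h3 x = g 3 x - (c0 * 6 + c1 * 6 + c2 * 6 + c3 * 6)" for x
  have g01: "(g 0 has_real_derivative g 1 x) (at x)" and g12: "(g 1 has_real_derivative g 2 x) (at x)"
    and g23: "(g 2 has_real_derivative g 3 x) (at x)" for x
    using g[of 0 x] g[of 1 x] g[of 2 x] by (simp_all add: eval_nat_numeral)
  have h01: "(h0 has_real_derivative h1 x) (at x)" for x
    unfolding h0_def[abs_def] h1_def by (intro DERIV_diff DERIV_add DERIV_cmult g01 p)
  have h12: "(h1 has_real_derivative h2 x) (at x)" for x
    unfolding h1_def[abs_def] h2_def by (intro DERIV_diff DERIV_add DERIV_cmult g12 p')
  have h23: "(h2 has_real_derivative h3 x) (at x)" for x
    unfolding h2_def[abs_def] h3_def by (intro DERIV_diff DERIV_add DERIV_cmult g23 p'')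
  have "h0 x0 = 0" "h0 x1 = 0" "h0 x2 = 0" "h0 x3 = 0"
    using lt by (simp_all add: h0_def p_def c0_def c1_def c2_def c3_def)
  then obtain \<xi> where "x0 < \<xi>" "\<xi> < x3" "h3 \<xi> = 0"
    using Rolle_third_deriv[OF lt h01 h12 h23] by blast
  then show ?thesis
    by (intro exI[of _ \<xi>]) (auto simp: h3_def divided_diff3_def c0_def c1_def c2_def c3_def algebra_simps)
qed

lemma abs_divided_diff2_le:
  assumes "0 < d" "x0 + d \<le> x1" "x1 + d \<le> x2"
    and "\<bar>f x0\<bar> \<le> \<epsilon>" "\<bar>f x1\<bar> \<le> \<epsilon>" "\<bar>f x2\<bar> \<le> \<epsilon>"
  shows "\<bar>divided_diff2 f x0 x1 x2\<bar> \<le> 2 * \<epsilon> / d\<^sup>2"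
proof -
  have p: "d * (2 * d) \<le> \<bar>(x0 - x1) * (x0 - x2)\<bar>" "d * d \<le> \<bar>(x1 - x0) * (x1 - x2)\<bar>"
    "(2 * d) * d \<le> \<bar>(x2 - x0) * (x2 - x1)\<bar>"
    unfolding abs_mult using assms by - (intro mult_mono; simp)+
  have sum3: "\<bar>a + b + c\<bar> \<le> A + B + C" if "\<bar>a\<bar> \<le> A" "\<bar>b\<bar> \<le> B" "\<bar>c\<bar> \<le> C" for a b c A B C :: real
    using that by linarith
  have "\<bar>f x0 / ((x0 - x1) * (x0 - x2))\<bar> \<le> \<epsilon> / (d * (2 * d))"
    "\<bar>f x1 / ((x1 - x0) * (x1 - x2))\<bar> \<le> \<epsilon> / (d * d)"
    "\<bar>f x2 / ((x2 - x0) * (x2 - x1))\<bar> \<le> \<epsilon> / ((2 * d) * d)"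
    by (rule abs_divide_le[OF _ _ p(1)] abs_divide_le[OF _ _ p(2)] abs_divide_le[OF _ _ p(3)];
        use assms in simp)+
  then have "\<bar>divided_diff2 f x0 x1 x2\<bar> \<le> \<epsilon> / (d * (2 * d)) + \<epsilon> / (d * d) + \<epsilon> / ((2 * d) * d)"
    unfolding divided_diff2_def by (rule sum3)
  also have "\<dots> = 2 * \<epsilon> / d\<^sup>2"
    using assms by (simp add: field_simps power2_eq_square)
  finally show ?thesis .
qed

lemma abs_divided_diff3_le:
  assumes "0 < d" "x0 + d \<le> x1" "x1 + d \<le> x2" "x2 + d \<le> x3"
    and "\<bar>f x0\<bar> \<le> \<epsilon>" "\<bar>f x1\<bar> \<le> \<epsilon>" "\<bar>f x2\<bar> \<le> \<epsilon>" "\<bar>f x3\<bar> \<le> \<epsilon>"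
  shows "\<bar>divided_diff3 f x0 x1 x2 x3\<bar> \<le> 4 * \<epsilon> / (3 * d ^ 3)"
proof -
  have p: "d * (2 * d) * (3 * d) \<le> \<bar>(x0 - x1) * (x0 - x2) * (x0 - x3)\<bar>"
    "d * d * (2 * d) \<le> \<bar>(x1 - x0) * (x1 - x2) * (x1 - x3)\<bar>"
    "(2 * d) * d * d \<le> \<bar>(x2 - x0) * (x2 - x1) * (x2 - x3)\<bar>"
    "(3 * d) * (2 * d) * d \<le> \<bar>(x3 - x0) * (x3 - x1) * (x3 - x2)\<bar>"
    unfolding abs_mult using assms by - (intro mult_mono; simp)+
  have sum4: "\<bar>a + b + c + e\<bar> \<le> A + B + C + E"
    if "\<bar>a\<bar> \<le> A" "\<bar>b\<bar> \<le> B" "\<bar>c\<bar> \<le> C" "\<bar>e\<bar> \<le> E" for a b c e A B C E :: real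
    using that by linarith
  have "\<bar>f x0 / ((x0 - x1) * (x0 - x2) * (x0 - x3))\<bar> \<le> \<epsilon> / (d * (2 * d) * (3 * d))"
    "\<bar>f x1 / ((x1 - x0) * (x1 - x2) * (x1 - x3))\<bar> \<le> \<epsilon> / (d * d * (2 * d))"
    "\<bar>f x2 / ((x2 - x0) * (x2 - x1) * (x2 - x3))\<bar> \<le> \<epsilon> / ((2 * d) * d * d)"
    "\<bar>f x3 / ((x3 - x0) * (x3 - x1) * (x3 - x2))\<bar> \<le> \<epsilon> / ((3 * d) * (2 * d) * d)"
    by (rule abs_divide_le[OF _ _ p(1)] abs_divide_le[OF _ _ p(2)] abs_divide_le[OF _ _ p(3)]
          abs_divide_le[OF _ _ p(4)]; use assms in simp)+
  then have "\<bar>divided_diff3 f x0 x1 x2 x3\<bar> \<le> \<epsilon> / (d * (2 * d) * (3 * d)) + \<epsilon> / (d * d * (2 * d))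
      + \<epsilon> / ((2 * d) * d * d) + \<epsilon> / ((3 * d) * (2 * d) * d)"
    unfolding divided_diff3_def by (rule sum4)
  also have "\<dots> = 4 * \<epsilon> / (3 * d ^ 3)"
    using assms by (simp add: field_simps power3_eq_cube)
  finally show ?thesis .
qed

lemma exists_small_higher_deriv:
  fixes g :: "nat \<Rightarrow> real \<Rightarrow> real"
  assumes g: "\<And>k x. (g k has_real_derivative g (Suc k) x) (at x)"
    and d: "0 < d" "x0 + d \<le> x1" "x1 + d \<le> x2" "x2 + d \<le> x3"
    and small: "\<bar>g 0 x0\<bar> \<le> \<epsilon>" "\<bar>g 0 x1\<bar> \<le> \<epsilon>" "\<bar>g 0 x2\<bar> \<le> \<epsilon>" "\<bar>g 0 x3\<bar> \<le> \<epsilon>"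
    and "k \<le> 3"
  shows "\<exists>\<xi>\<in>{x0..x3}. \<bar>g k \<xi>\<bar> \<le> (2 / d) ^ k * \<epsilon>"
proof -
  consider "k = 0" | "k = 1" | "k = 2" | "k = 3"
    using \<open>k \<le> 3\<close> by linarith
  then show ?thesis
  proof cases
    case 1
    then show ?thesis
      using small d by (intro bexI[of _ x0]) auto
  next
    case 2
    obtain \<xi> where \<xi>: "x0 < \<xi>" "\<xi> < x1" "g 0 x1 - g 0 x0 = (x1 - x0) * g 1 \<xi>"
      using MVT2[of x0 x1 "g 0" "g 1"] g[of 0] d by auto
    have "\<bar>g 1 \<xi>\<bar> * d \<le> \<bar>g 1 \<xi>\<bar> * (x1 - x0)"
      using d by (intro mult_left_mono) auto
    also have "\<dots> = \<bar>g 0 x1 - g 0 x0\<bar>"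
      using \<xi> by (simp add: abs_mult)
    also have "\<dots> \<le> 2 * \<epsilon>"
      using small by linarith
    finally show ?thesis
      using 2 \<xi> d by (intro bexI[of _ \<xi>]) (auto simp: field_simps)
  next
    case 3
    obtain \<xi> where "x0 < \<xi>" "\<xi> < x2" "g 2 \<xi> = 2 * divided_diff2 (g 0) x0 x1 x2"
      using divided_diff2_mean_value[where g = g, OF g, of x0 x1 x2] d by auto
    moreover have "\<bar>divided_diff2 (g 0) x0 x1 x2\<bar> \<le> 2 * \<epsilon> / d\<^sup>2"
      using d small by (intro abs_divided_diff2_le)
    ultimately show ?thesis
      using 3 d by (intro bexI[of _ \<xi>]) (auto simp: field_simps power2_eq_square)
  next
    case 4
    obtain \<xi> where "x0 < \<xi>" "\<xi> < x3" "g 3 \<xi> = 6 * divided_diff3 (g 0) x0 x1 x2 x3"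
      using divided_diff3_mean_value[where g = g, OF g, of x0 x1 x2 x3] d by auto
    moreover have "\<bar>divided_diff3 (g 0) x0 x1 x2 x3\<bar> \<le> 4 * \<epsilon> / (3 * d ^ 3)"
      using d small by (intro abs_divided_diff3_le)
    ultimately show ?thesis
      using 4 d by (intro bexI[of _ \<xi>]) (auto simp: field_simps power3_eq_cube)
  qed
qed

section \<open>Perturbed two-frequency exponential sums\<close>

definition two_exp :: "complex \<Rightarrow> complex \<Rightarrow> complex \<Rightarrow> complex" where
  "two_exp A B w = A * exp (\<i> * w) + B * exp (2 * \<i> * w)"

lemma holomorphic_two_exp: "two_exp A B holomorphic_on S"
  unfolding two_exp_def[abs_def] by (intro holomorphic_intros)

lemma higher_deriv_two_exp: "(deriv ^^ k) (two_exp A B) = two_exp (\<i> ^ k * A) ((2 * \<i>) ^ k * B)"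
proof (induction k)
  case (Suc k)
  have "deriv (two_exp C D) = two_exp (\<i> * C) (2 * \<i> * D)" for C D
    unfolding two_exp_def[abs_def]
    by (intro ext DERIV_imp_deriv) (auto intro!: derivative_eq_intros simp: algebra_simps)
  then show ?case
    by (simp add: Suc.IH mult.assoc)
qed simp

lemma norm_exp_i_diff_le: "cmod (exp (\<i> * of_real y) - exp (\<i> * of_real z)) \<le> \<bar>y - z\<bar>"
proof -
  have "exp (\<i> * of_real y) - exp (\<i> * of_real z) = exp (\<i> * of_real z) * (exp (\<i> * of_real (y - z)) - 1)"
    by (simp add: algebra_simps flip: exp_add)
  then have "cmod (exp (\<i> * of_real y) - exp (\<i> * of_real z)) = 2 * \<bar>sin ((y - z) / 2)\<bar>"
    by (simp only: norm_mult norm_exp_i_times dist_exp_i_1 mult_1)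
  also have "\<dots> \<le> \<bar>y - z\<bar>"
    using abs_sin_x_le_abs_x[of "(y - z) / 2"] by simp
  finally show ?thesis .
qed

lemma norm_two_exp_diff_le:
  "cmod (two_exp A B (of_real y) - two_exp A B (of_real z)) \<le> (cmod A + 2 * cmod B) * \<bar>y - z\<bar>"
proof -
  have "\<bar>2 * y - 2 * z\<bar> = 2 * \<bar>y - z\<bar>"
    by (simp only: right_diff_distrib[symmetric] abs_mult abs_numeral)
  then have diff2: "cmod (exp (\<i> * of_real (2 * y)) - exp (\<i> * of_real (2 * z))) \<le> 2 * \<bar>y - z\<bar>"
    using norm_exp_i_diff_le[of "2 * y" "2 * z"] by (simp only:)
  have "two_exp A B (of_real y) - two_exp A B (of_real z)
      = A * (exp (\<i> * of_real y) - exp (\<i> * of_real z))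
        + B * (exp (\<i> * of_real (2 * y)) - exp (\<i> * of_real (2 * z)))"
    by (simp add: two_exp_def algebra_simps)
  also have "cmod \<dots> \<le> cmod A * cmod (exp (\<i> * of_real y) - exp (\<i> * of_real z))
      + cmod B * cmod (exp (\<i> * of_real (2 * y)) - exp (\<i> * of_real (2 * z)))"
    by (rule order_trans[OF norm_triangle_ineq]) (simp only: norm_mult order_refl)
  also have "\<dots> \<le> cmod A * \<bar>y - z\<bar> + cmod B * (2 * \<bar>y - z\<bar>)"
    by (intro add_mono mult_left_mono norm_exp_i_diff_le diff2 norm_ge_zero)
  finally show ?thesis
    by (simp add: algebra_simps)
qed

lemma two_exp_higher_derivs_not_all_small:
  assumes unit: "(cmod A)\<^sup>2 + (cmod B)\<^sup>2 = 1"
  shows "\<exists>k\<le>3. fact k / 12 + 1 / 8 < \<bar>Re ((deriv ^^ k) (two_exp A B) (of_real a))\<bar>"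
proof (rule ccontr)
  define u where "u = A * exp (\<i> * of_real a)"
  define v where "v = B * exp (2 * \<i> * of_real a)"
  have derivs: "Re ((deriv ^^ k) (two_exp A B) (of_real a)) = Re (\<i> ^ k * u + (2 * \<i>) ^ k * v)" for k
    by (simp add: higher_deriv_two_exp two_exp_def u_def v_def mult.assoc)
  assume "\<not> ?thesis"
  then have small: "\<bar>Re (\<i> ^ k * u + (2 * \<i>) ^ k * v)\<bar> \<le> fact k / 12 + 1 / 8" if "k \<le> 3" for k
    using that by (auto simp: derivs not_less)
  have "\<bar>Re u + Re v\<bar> \<le> 5 / 24" "\<bar>- Im u - 2 * Im v\<bar> \<le> 5 / 24"
       "\<bar>- Re u - 4 * Re v\<bar> \<le> 7 / 24" "\<bar>Im u + 8 * Im v\<bar> \<le> 5 / 8"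
    using small[of 0] small[of 1] small[of 2] small[of 3]
    by (simp_all add: power2_eq_square power3_eq_cube fact_numeral)
  then have bounds: "\<bar>Re u\<bar> \<le> 3 / 8" "\<bar>Re v\<bar> \<le> 1 / 6" "\<bar>Im u\<bar> \<le> 1 / 2" "\<bar>Im v\<bar> \<le> 1 / 7"
    by linarith+
  have sq: "x\<^sup>2 \<le> c\<^sup>2" if "\<bar>x\<bar> \<le> c" for x c :: real
    using that by (metis abs_ge_zero power2_abs power_mono)
  have "(Re u)\<^sup>2 + (Re v)\<^sup>2 + (Im u)\<^sup>2 + (Im v)\<^sup>2 \<le> (3 / 8)\<^sup>2 + (1 / 6)\<^sup>2 + (1 / 2)\<^sup>2 + (1 / 7)\<^sup>2"
    by (intro add_mono sq bounds)
  then have "(Re u)\<^sup>2 + (Re v)\<^sup>2 + (Im u)\<^sup>2 + (Im v)\<^sup>2 < 1"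
    by (simp add: power_divide)
  moreover have "(cmod u)\<^sup>2 + (cmod v)\<^sup>2 = 1"
    using unit by (simp add: u_def v_def norm_mult)
  then have "(Re u)\<^sup>2 + (Re v)\<^sup>2 + (Im u)\<^sup>2 + (Im v)\<^sup>2 = 1"
    by (simp add: cmod_power2 algebra_simps)
  ultimately show False
    by simp
qed

lemma higher_deriv_near_two_exp:
  fixes f :: "complex \<Rightarrow> complex"
  assumes holf: "f holomorphic_on UNIV"
    and near: "\<And>w. \<bar>Im w\<bar> \<le> 1 \<Longrightarrow> cmod (w - of_real a) \<le> 101 / 100 \<Longrightarrow> cmod (f w - two_exp A B w) \<le> 1 / 12"
    and x: "\<bar>x - a\<bar> \<le> 1 / 100"
  shows "cmod ((deriv ^^ k) f (of_real x) - (deriv ^^ k) (two_exp A B) (of_real x)) \<le> fact k / 12"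
proof -
  define E where "E w = f w - two_exp A B w" for w
  have holE: "E holomorphic_on UNIV"
    unfolding E_def[abs_def] by (intro holomorphic_intros holf holomorphic_two_exp)
  have "(deriv ^^ k) E (of_real x) = (deriv ^^ k) f (of_real x) - (deriv ^^ k) (two_exp A B) (of_real x)"
    unfolding E_def[abs_def] by (rule higher_deriv_diff) (auto intro: holf holomorphic_two_exp)
  moreover have "cmod ((deriv ^^ k) E (of_real x)) \<le> fact k * (1 / 12) / 1 ^ k"
  proof (rule Cauchy_inequality)
    show "E holomorphic_on ball (of_real x) 1"
      using holE by (rule holomorphic_on_subset) auto
    show "continuous_on (cball (of_real x) 1) E"
      using holomorphic_on_imp_continuous_on[OF holE] by (rule continuous_on_subset) auto
    fix w assume w: "cmod (of_real x - w) = 1"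
    have "\<bar>Im w\<bar> \<le> 1"
      using abs_Im_le_cmod[of "of_real x - w"] w by simp
    moreover have "cmod (w - of_real a) \<le> cmod (w - of_real x) + cmod (of_real x - of_real a :: complex)"
      by (rule order_trans[OF _ norm_triangle_ineq]) simp
    then have "cmod (w - of_real a) \<le> 101 / 100"
      using w x by (simp add: norm_minus_commute flip: of_real_diff)
    ultimately show "cmod (E w) \<le> 1 / 12"
      unfolding E_def by (rule near)
  qed simp
  ultimately show ?thesis
    by simp
qed

lemma has_real_derivative_Re_higher_deriv:
  assumes "f holomorphic_on UNIV"
  shows "((\<lambda>x. Re ((deriv ^^ k) f (of_real x))) has_real_derivative Re ((deriv ^^ Suc k) f (of_real x))) (at x)"
proof -
  have "((deriv ^^ k) f has_field_derivative (deriv ^^ Suc k) f (of_real x)) (at (of_real x))"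
    using holomorphic_higher_deriv[OF assms open_UNIV] by (auto intro: holomorphic_derivI)
  then show ?thesis
    by (rule has_real_derivative_Re_of_real)
qed

lemma Re_higher_deriv_two_exp_le:
  fixes f :: "complex \<Rightarrow> complex"
  assumes holf: "f holomorphic_on UNIV"
    and near: "\<And>w. \<bar>Im w\<bar> \<le> 1 \<Longrightarrow> cmod (w - of_real a) \<le> 101 / 100 \<Longrightarrow> cmod (f w - two_exp A B w) \<le> 1 / 12"
    and AB: "cmod A \<le> 1" "cmod B \<le> 1"
    and \<xi>: "\<bar>\<xi> - a\<bar> \<le> 1 / 100"
  shows "\<bar>Re ((deriv ^^ k) (two_exp A B) (of_real a))\<bar>
    \<le> \<bar>Re ((deriv ^^ k) f (of_real \<xi>))\<bar> + fact k / 12 + (1 + 2 * 2 ^ k) * \<bar>\<xi> - a\<bar>"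
proof -
  have "cmod ((deriv ^^ k) f (of_real \<xi>) - (deriv ^^ k) (two_exp A B) (of_real \<xi>)) \<le> fact k / 12"
    by (rule higher_deriv_near_two_exp[OF holf near \<xi>])
  moreover have "cmod ((deriv ^^ k) (two_exp A B) (of_real \<xi>) - (deriv ^^ k) (two_exp A B) (of_real a))
      \<le> (1 + 2 * 2 ^ k) * \<bar>\<xi> - a\<bar>"
  proof -
    have "2 ^ k * cmod B \<le> 2 ^ k"
      using AB by (simp add: mult_left_le)
    moreover have "cmod (\<i> ^ k * A) = cmod A" "cmod ((2 * \<i>) ^ k * B) = 2 ^ k * cmod B"
      by (simp_all add: norm_mult norm_power)
    ultimately have "cmod (\<i> ^ k * A) + 2 * cmod ((2 * \<i>) ^ k * B) \<le> 1 + 2 * 2 ^ k"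
      using AB by linarith
    then show ?thesis
      unfolding higher_deriv_two_exp
      by (rule order_trans[OF norm_two_exp_diff_le mult_right_mono]) simp
  qed
  ultimately show ?thesis
    using abs_Re_le_cmod[of "(deriv ^^ k) f (of_real \<xi>) - (deriv ^^ k) (two_exp A B) (of_real \<xi>)"]
      abs_Re_le_cmod[of "(deriv ^^ k) (two_exp A B) (of_real \<xi>) - (deriv ^^ k) (two_exp A B) (of_real a)"]
    by (simp only: minus_complex.sel)
qed

lemma higher_deriv_error_terms_le:
  fixes \<eta> :: real
  assumes "0 < \<eta>" "\<eta> \<le> 1 / 2048" and "k \<le> 3"
  shows "(2 / \<eta>) ^ k * (\<eta> ^ 3 / 2 ^ 7) + (1 + 2 * 2 ^ k) * (7 * \<eta>) \<le> 1 / 8"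
proof -
  have "(2 / \<eta>) ^ k * (\<eta> ^ 3 / 2 ^ 7) = 2 ^ k * \<eta> ^ (3 - k) / 2 ^ 7"
    using assms by (simp add: power_diff power_divide)
  also have "\<dots> \<le> 2 ^ 3 * 1 / 2 ^ 7"
    using assms by (intro divide_right_mono mult_mono power_increasing power_le_one) auto
  finally have "(2 / \<eta>) ^ k * (\<eta> ^ 3 / 2 ^ 7) \<le> 1 / 16"
    by simp
  moreover have "(1 + 2 * 2 ^ k) * (7 * \<eta>) \<le> (1 + 2 * 2 ^ 3) * (7 * (1 / 2048))"
    using assms by (intro mult_mono add_left_mono power_increasing) auto
  moreover have "(1 + 2 * 2 ^ 3) * (7 * (1 / 2048)) = (119 / 2048 :: real)"
    by simp
  ultimately show ?thesis
    by linarith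
qed

lemma Re_ge_on_one_of_seven_intervals:
  fixes f :: "complex \<Rightarrow> complex"
  assumes holf: "f holomorphic_on UNIV"
    and unit: "(cmod A)\<^sup>2 + (cmod B)\<^sup>2 = 1"
    and near: "\<And>w. \<bar>Im w\<bar> \<le> 1 \<Longrightarrow> cmod (w - of_real a) \<le> 101 / 100 \<Longrightarrow> cmod (f w - two_exp A B w) \<le> 1 / 12"
    and \<eta>: "0 < \<eta>" "\<eta> \<le> 1 / 2048"
  shows "\<exists>j::nat. j \<le> 6 \<and> (\<forall>x\<in>{a + real j * \<eta> .. a + (real j + 1) * \<eta>}. \<eta> ^ 3 / 2 ^ 7 \<le> \<bar>Re (f (of_real x))\<bar>)"
proof (rule ccontr)
  define \<epsilon> where "\<epsilon> = \<eta> ^ 3 / 2 ^ 7"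
  define g where "g k x = Re ((deriv ^^ k) f (of_real x))" for k x
  assume "\<not> ?thesis"
  then have small: "\<exists>x\<in>{a + real j * \<eta> .. a + (real j + 1) * \<eta>}. \<bar>g 0 x\<bar> \<le> \<epsilon>" if "j \<le> 6" for j :: nat
    using that by (force simp: g_def \<epsilon>_def)
  obtain x0 where x0: "a \<le> x0" "x0 \<le> a + \<eta>" "\<bar>g 0 x0\<bar> \<le> \<epsilon>"
    using small[of 0] by auto
  obtain x1 where x1: "a + 2 * \<eta> \<le> x1" "x1 \<le> a + 3 * \<eta>" "\<bar>g 0 x1\<bar> \<le> \<epsilon>"
    using small[of 2] by auto
  obtain x2 where x2: "a + 4 * \<eta> \<le> x2" "x2 \<le> a + 5 * \<eta>" "\<bar>g 0 x2\<bar> \<le> \<epsilon>"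
    using small[of 4] by auto
  obtain x3 where x3: "a + 6 * \<eta> \<le> x3" "x3 \<le> a + 7 * \<eta>" "\<bar>g 0 x3\<bar> \<le> \<epsilon>"
    using small[of 6] by auto
  have gaps: "x0 + \<eta> \<le> x1" "x1 + \<eta> \<le> x2" "x2 + \<eta> \<le> x3"
    using x0 x1 x2 x3 by linarith+
  have g_deriv: "(g k has_real_derivative g (Suc k) x) (at x)" for k x
    unfolding g_def[abs_def] by (rule has_real_derivative_Re_higher_deriv[OF holf])
  have AB: "cmod A \<le> 1" "cmod B \<le> 1"
    using norm_le_if_norm_sq_add_le[of A B 1] unit by simp_all
  have "\<bar>Re ((deriv ^^ k) (two_exp A B) (of_real a))\<bar> \<le> fact k / 12 + 1 / 8" if k3: "k \<le> 3" for k
  proof -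
    obtain \<xi> where \<xi>: "\<xi> \<in> {x0..x3}" and small_deriv: "\<bar>g k \<xi>\<bar> \<le> (2 / \<eta>) ^ k * \<epsilon>"
      using exists_small_higher_deriv[where g = g, OF g_deriv \<open>0 < \<eta>\<close> gaps x0(3) x1(3) x2(3) x3(3) k3]
      by blast
    have dist: "\<bar>\<xi> - a\<bar> \<le> 7 * \<eta>"
      using \<xi> x0 x3 \<eta> by auto
    then have "(1 + 2 * 2 ^ k) * \<bar>\<xi> - a\<bar> \<le> (1 + 2 * 2 ^ k) * (7 * \<eta>)"
      by (intro mult_left_mono) auto
    moreover have "\<bar>Re ((deriv ^^ k) (two_exp A B) (of_real a))\<bar>
        \<le> \<bar>g k \<xi>\<bar> + fact k / 12 + (1 + 2 * 2 ^ k) * \<bar>\<xi> - a\<bar>"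
      unfolding g_def using dist \<eta> by (intro Re_higher_deriv_two_exp_le[OF holf near AB]) auto
    ultimately show ?thesis
      using small_deriv higher_deriv_error_terms_le[OF \<eta> k3] unfolding \<epsilon>_def by linarith
  qed
  then show False
    using two_exp_higher_derivs_not_all_small[OF unit, of a] by force
qed

section \<open>Rudin--Shapiro polynomials\<close>

lemma RS_P_0 [simp]: "RS_P 0 z = 1" and RS_Q_0 [simp]: "RS_Q 0 z = 1"
  by (simp_all add: RS_P_def RS_Q_def)

lemma RS_P_Suc: "RS_P (Suc s) z = RS_P s z + z ^ 2 ^ s * RS_Q s z"
  and RS_Q_Suc: "RS_Q (Suc s) z = RS_P s z - z ^ 2 ^ s * RS_Q s z"
  by (simp_all add: RS_P_def RS_Q_def)

lemma holomorphic_RS_P: "RS_P s holomorphic_on S"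
  and holomorphic_RS_Q: "RS_Q s holomorphic_on S"
proof -
  have "RS_P s holomorphic_on S \<and> RS_Q s holomorphic_on S"
    by (induction s) (auto simp: RS_P_Suc[abs_def] RS_Q_Suc[abs_def] intro!: holomorphic_intros)
  then show "RS_P s holomorphic_on S" "RS_Q s holomorphic_on S" by auto
qed

lemma norm_add_sq_plus_norm_diff_sq:
  fixes a b :: complex
  shows "(cmod (a + b))\<^sup>2 + (cmod (a - b))\<^sup>2 = 2 * ((cmod a)\<^sup>2 + (cmod b)\<^sup>2)"
  by (simp only: cmod_power2) (simp add: power2_eq_square algebra_simps)

lemma RS_norm_sq_Suc:
  "(cmod (RS_P (Suc s) z))\<^sup>2 + (cmod (RS_Q (Suc s) z))\<^sup>2
     = 2 * ((cmod (RS_P s z))\<^sup>2 + (cmod z ^ 2 ^ s)\<^sup>2 * (cmod (RS_Q s z))\<^sup>2)"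
  unfolding RS_P_Suc RS_Q_Suc norm_add_sq_plus_norm_diff_sq
  by (simp add: norm_mult norm_power power_mult_distrib)

lemma RS_norm_sq_on_unit_circle:
  assumes "cmod z = 1"
  shows "(cmod (RS_P s z))\<^sup>2 + (cmod (RS_Q s z))\<^sup>2 = 2 ^ (s + 1)"
  by (induction s) (simp_all add: RS_norm_sq_Suc assms)

lemma RS_norm_sq_le:
  "(cmod (RS_P s z))\<^sup>2 + (cmod (RS_Q s z))\<^sup>2 \<le> 2 ^ (s + 1) * max 1 (cmod z) ^ (2 * 2 ^ s)"
proof (induction s)
  case (Suc s)
  define m where "m = max 1 (cmod z)"
  have "(cmod z ^ 2 ^ s)\<^sup>2 = cmod z ^ (2 * 2 ^ s)"
    by (simp add: mult.commute flip: power_mult)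
  also have "\<dots> \<le> m ^ (2 * 2 ^ s)"
    by (intro power_mono) (auto simp: m_def)
  finally have "(cmod (RS_P s z))\<^sup>2 + (cmod z ^ 2 ^ s)\<^sup>2 * (cmod (RS_Q s z))\<^sup>2
      \<le> m ^ (2 * 2 ^ s) * ((cmod (RS_P s z))\<^sup>2 + (cmod (RS_Q s z))\<^sup>2)"
    by (simp add: m_def distrib_left add_mono mult_right_mono mult_le_cancel_right1)
  also have "\<dots> \<le> m ^ (2 * 2 ^ s) * (2 ^ (s + 1) * m ^ (2 * 2 ^ s))"
    using Suc.IH by (intro mult_left_mono) (auto simp: m_def)
  also have "\<dots> = 2 ^ (s + 1) * m ^ (2 * 2 ^ Suc s)"
    by (simp flip: power_add)
  finally show ?case
    by (simp add: RS_norm_sq_Suc m_def)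
qed simp

definition alpha_cx :: "nat \<Rightarrow> complex \<Rightarrow> complex" where
  "alpha_cx t w = of_real (2 powr (- (real t + 1) / 2)) * RS_P t (exp (\<i> * w / of_real (Tpar t)))"

definition beta_cx :: "nat \<Rightarrow> complex \<Rightarrow> complex" where
  "beta_cx t w = of_real (2 powr (- (real t + 1) / 2)) * RS_Q t (exp (\<i> * w / of_real (Tpar t)))"

definition H_cx :: "nat \<Rightarrow> complex \<Rightarrow> complex" where
  "H_cx t w = exp (\<i> * w) * alpha_cx t w + exp (2 * \<i> * w) * beta_cx t w"

lemma alpha_cx_of_real [simp]: "alpha_cx t (of_real x) = alpha t x"
  and beta_cx_of_real [simp]: "beta_cx t (of_real x) = beta t x"
  by (simp_all add: alpha_def alpha_cx_def beta_def beta_cx_def cis_conv_exp)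

lemma H_eq_H_cx: "H t x = H_cx t (of_real x)"
  by (simp add: H_def H_cx_def cis_conv_exp mult.commute mult.left_commute)

lemma holomorphic_alpha_cx: "alpha_cx t holomorphic_on S"
  and holomorphic_beta_cx: "beta_cx t holomorphic_on S"
proof -
  have "(\<lambda>w. exp (\<i> * w / of_real (Tpar t))) holomorphic_on S"
    by (intro holomorphic_intros) (simp add: Tpar_def)
  then have "(\<lambda>w. RS_P t (exp (\<i> * w / of_real (Tpar t)))) holomorphic_on S"
    and "(\<lambda>w. RS_Q t (exp (\<i> * w / of_real (Tpar t)))) holomorphic_on S"
    using holomorphic_on_compose[OF _ holomorphic_RS_P] holomorphic_on_compose[OF _ holomorphic_RS_Q]
    by (simp_all add: o_def)
  then show "alpha_cx t holomorphic_on S" "beta_cx t holomorphic_on S"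
    unfolding alpha_cx_def[abs_def] beta_cx_def[abs_def] by (auto intro!: holomorphic_intros)
qed

lemma holomorphic_H_cx: "H_cx t holomorphic_on S"
  unfolding H_cx_def[abs_def]
  by (intro holomorphic_intros holomorphic_alpha_cx holomorphic_beta_cx)

lemma alpha_beta_cx_norm_sq:
  "(cmod (alpha_cx t w))\<^sup>2 + (cmod (beta_cx t w))\<^sup>2
     = ((cmod (RS_P t (exp (\<i> * w / of_real (Tpar t)))))\<^sup>2
        + (cmod (RS_Q t (exp (\<i> * w / of_real (Tpar t)))))\<^sup>2) / 2 ^ (t + 1)"
proof -
  have "(2 powr (- (real t + 1) / 2))\<^sup>2 = 2 powr (- (real t + 1))"
    by (simp add: powr_power) (rule arg_cong[where f = "(powr) 2"], simp add: field_simps)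
  also have "\<dots> = inverse (2 powr real (t + 1))"
    by (simp only: powr_minus of_nat_add of_nat_1)
  also have "\<dots> = 1 / 2 ^ (t + 1)"
    by (simp only: powr_realpow zero_less_numeral inverse_eq_divide)
  finally show ?thesis
    by (simp add: alpha_cx_def beta_cx_def norm_mult power_mult_distrib add_divide_distrib)
qed

lemma norm_alpha_sq_plus_norm_beta_sq: "(cmod (alpha t x))\<^sup>2 + (cmod (beta t x))\<^sup>2 = 1"
proof -
  have "cmod (exp (\<i> * of_real x / of_real (Tpar t))) = 1"
    by (simp add: norm_exp_eq_Re)
  then show ?thesis
    using alpha_beta_cx_norm_sq[of t "of_real x"] by (simp add: RS_norm_sq_on_unit_circle)
qed

lemma alpha_beta_cx_norm_sq_le: "(cmod (alpha_cx t w))\<^sup>2 + (cmod (beta_cx t w))\<^sup>2 \<le> exp (\<bar>Im w\<bar> / 512)"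
proof -
  define z where "z = exp (\<i> * w / of_real (Tpar t))"
  have "cmod z = exp (- Im w / Tpar t)"
    by (simp add: z_def norm_exp_eq_Re Re_divide_of_real)
  also have "\<dots> \<le> exp (\<bar>Im w\<bar> / Tpar t)"
    by (subst exp_le_cancel_iff, rule divide_right_mono) (auto simp: Tpar_def)
  finally have "max 1 (cmod z) ^ (2 * 2 ^ t) \<le> exp (\<bar>Im w\<bar> / Tpar t) ^ (2 * 2 ^ t)"
    by (intro power_mono) (auto simp: Tpar_def)
  also have "\<dots> = exp (\<bar>Im w\<bar> / 512)"
    by (simp add: Tpar_def power_add flip: exp_of_nat_mult)
  finally have "max 1 (cmod z) ^ (2 * 2 ^ t) \<le> exp (\<bar>Im w\<bar> / 512)" .
  moreover have "(cmod (alpha_cx t w))\<^sup>2 + (cmod (beta_cx t w))\<^sup>2 \<le> max 1 (cmod z) ^ (2 * 2 ^ t)"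
    unfolding alpha_beta_cx_norm_sq z_def[symmetric]
    using RS_norm_sq_le[of t z] by (simp add: pos_divide_le_eq algebra_simps)
  ultimately show ?thesis
    by linarith
qed

lemma norm_alpha_beta_cx_le_3:
  assumes "\<bar>Im w\<bar> \<le> 1024"
  shows "cmod (alpha_cx t w) \<le> 3" and "cmod (beta_cx t w) \<le> 3"
proof -
  have "exp (\<bar>Im w\<bar> / 512) \<le> exp 2"
    using assms by simp
  then have "(cmod (alpha_cx t w))\<^sup>2 + (cmod (beta_cx t w))\<^sup>2 \<le> 9"
    using alpha_beta_cx_norm_sq_le[of t w] exp_2_le_9 by linarith
  then show "cmod (alpha_cx t w) \<le> 3" "cmod (beta_cx t w) \<le> 3"
    using norm_le_if_norm_sq_add_le[of "alpha_cx t w" "beta_cx t w" 3] by simp_all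
qed

lemma H_cx_near_two_exp:
  assumes "\<bar>Im w\<bar> \<le> 1" and "cmod (w - of_real a) \<le> 101 / 100"
  shows "cmod (H_cx t w - two_exp (alpha t a) (beta t a) w) \<le> 1 / 12"
proof -
  have "cmod (F w - F (of_real a)) \<le> 3 / 512 * (101 / 100)"
    if "F holomorphic_on UNIV" and bound: "\<And>v. \<bar>Im v\<bar> \<le> 1024 \<Longrightarrow> cmod (F v) \<le> 3" for F
  proof -
    have "cmod (F w - F (of_real a)) \<le> 3 / 512 * cmod (w - of_real a)"
    proof (rule holomorphic_lipschitz_on_cball[OF that(1) open_UNIV subset_UNIV])
      fix v :: complex assume "v \<in> cball (of_real a) (101 / 100 + 512)"
      then have "\<bar>Im v\<bar> \<le> 1024"
        using abs_Im_le_cmod[of "v - of_real a"] by (simp add: dist_norm norm_minus_commute)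
      then show "cmod (F v) \<le> 3"
        by (rule bound)
    qed (use assms in \<open>auto simp: dist_norm norm_minus_commute\<close>)
    then show ?thesis
      using assms(2) by linarith
  qed
  from this[OF holomorphic_alpha_cx norm_alpha_beta_cx_le_3(1)] this[OF holomorphic_beta_cx norm_alpha_beta_cx_le_3(2)]
  have lip: "cmod (alpha_cx t w - alpha t a) \<le> 3 / 512 * (101 / 100)"
    "cmod (beta_cx t w - beta t a) \<le> 3 / 512 * (101 / 100)"
    by simp_all
  have "cmod (exp (\<i> * w)) \<le> exp 1"
    using assms(1) by simp
  then have exp1: "cmod (exp (\<i> * w)) \<le> 3"
    using exp_le by linarith
  have "cmod (exp (2 * \<i> * w)) \<le> exp 2"
    using assms(1) by simp
  then have exp2: "cmod (exp (2 * \<i> * w)) \<le> 9"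
    using exp_2_le_9 by linarith
  have "H_cx t w - two_exp (alpha t a) (beta t a) w
      = exp (\<i> * w) * (alpha_cx t w - alpha t a) + exp (2 * \<i> * w) * (beta_cx t w - beta t a)"
    by (simp add: H_cx_def two_exp_def algebra_simps)
  also have "cmod \<dots> \<le> cmod (exp (\<i> * w)) * cmod (alpha_cx t w - alpha t a)
      + cmod (exp (2 * \<i> * w)) * cmod (beta_cx t w - beta t a)"
    by (rule order_trans[OF norm_triangle_ineq]) (simp only: norm_mult order_refl)
  also have "\<dots> \<le> 3 * (3 / 512 * (101 / 100)) + 9 * (3 / 512 * (101 / 100))"
    using exp1 exp2 lip by (intro add_mono mult_mono) auto
  finally show ?thesis
    by simp
qed

lemma ivl_length_greaterThanLessThan: "a < b \<Longrightarrow> ivl_length {a<..<b} = b - a"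
  by (simp add: ivl_length_def)

lemma greaterThanLessThan_Inf_Sup_subset:
  fixes I :: "real set"
  assumes "is_interval I" and "bounded I" and "I \<noteq> {}"
  shows "{Inf I<..<Sup I} \<subseteq> I"
proof
  fix x assume x: "x \<in> {Inf I<..<Sup I}"
  obtain y where "y \<in> I" "y < x"
    using x cInf_less_iff[OF \<open>I \<noteq> {}\<close> bounded_imp_bdd_below[OF \<open>bounded I\<close>]] by auto
  moreover obtain z where "z \<in> I" "x < z"
    using x less_cSup_iff[OF \<open>I \<noteq> {}\<close> bounded_imp_bdd_above[OF \<open>bounded I\<close>]] by auto
  ultimately show "x \<in> I"
    using \<open>is_interval I\<close> unfolding is_interval_1 by (meson less_imp_le)
qed

lemma subinterval_of_grid_cell:
  fixes I :: "real set"
  assumes I: "is_interval I" "I \<noteq> {}" "bounded I" "ivl_length I = real n * \<eta>"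
    and "0 < \<eta>" and "j < n"
    and P: "\<forall>x\<in>{Inf I + real j * \<eta> .. Inf I + (real j + 1) * \<eta>}. P x"
  shows "\<exists>J. J \<subseteq> I \<and> is_interval J \<and> J \<noteq> {} \<and> bounded J \<and> ivl_length J = \<eta> \<and> (\<forall>x\<in>J. P x)"
proof -
  define J where "J = {Inf I + real j * \<eta> <..< Inf I + (real j + 1) * \<eta>}"
  have "0 \<le> real j * \<eta>" "(real j + 1) * \<eta> \<le> real n * \<eta>"
    using \<open>j < n\<close> \<open>0 < \<eta>\<close> by (auto intro: mult_right_mono)
  then have "Inf I \<le> Inf I + real j * \<eta>" "Inf I + (real j + 1) * \<eta> \<le> Sup I"
    using I(4) unfolding ivl_length_def by linarith+
  then have "J \<subseteq> {Inf I<..<Sup I}"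
    unfolding J_def greaterThanLessThan_subseteq_greaterThanLessThan by blast
  then have "J \<subseteq> I"
    using greaterThanLessThan_Inf_Sup_subset[OF I(1,3,2)] by blast
  moreover have "ivl_length J = \<eta>" "J \<noteq> {}"
    using \<open>0 < \<eta>\<close> by (simp_all add: J_def ivl_length_greaterThanLessThan algebra_simps)
  moreover have "is_interval J" "bounded J"
    by (simp_all add: J_def is_interval_oo)
  moreover have "\<forall>x\<in>J. P x"
    using P by (auto simp: J_def)
  ultimately show ?thesis
    by blast
qed

theorem lemma3p4:
  fixes t :: nat and \<eta> :: real
  assumes "odd t" and "t > 0" and "0 < \<eta>" and "\<eta> < 2 powr (-11)"
  shows "(\<forall>I :: real set. is_interval I \<and> I \<noteq> {} \<and> bounded I \<and> ivl_length I = 7 * \<eta> \<longrightarrow>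
            (\<exists>J. J \<subseteq> I \<and> is_interval J \<and> J \<noteq> {} \<and> bounded J \<and> ivl_length J = \<eta> \<and>
                 (\<forall>x\<in>J. \<bar>Re (H t x)\<bar> \<ge> \<eta> ^ 3 / 2 ^ 7)))
       \<and> (\<forall>a :: real. \<exists>j :: nat. j \<le> 6 \<and>
            (\<forall>x\<in>{a + real j * \<eta> .. a + (real j + 1) * \<eta>}. \<bar>Re (H t x)\<bar> \<ge> \<eta> ^ 3 / 2 ^ 7))"
proof -
  have \<eta>: "0 < \<eta>" "\<eta> \<le> 1 / 2048"
    using assms(3,4) by (simp_all add: powr_minus_divide powr_realpow)
  have seven: "\<exists>j :: nat. j \<le> 6 \<and> (\<forall>x\<in>{a + real j * \<eta> .. a + (real j + 1) * \<eta>}. \<bar>Re (H t x)\<bar> \<ge> \<eta> ^ 3 / 2 ^ 7)"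
    for a
    using Re_ge_on_one_of_seven_intervals[OF holomorphic_H_cx norm_alpha_sq_plus_norm_beta_sq H_cx_near_two_exp \<eta>]
    by (simp add: H_eq_H_cx)
  moreover have "\<exists>J. J \<subseteq> I \<and> is_interval J \<and> J \<noteq> {} \<and> bounded J \<and> ivl_length J = \<eta> \<and> (\<forall>x\<in>J. \<bar>Re (H t x)\<bar> \<ge> \<eta> ^ 3 / 2 ^ 7)"
    if "is_interval I" "I \<noteq> {}" "bounded I" "ivl_length I = 7 * \<eta>" for I :: "real set"
  proof -
    obtain j :: nat where "j \<le> 6"
      and "\<forall>x\<in>{Inf I + real j * \<eta> .. Inf I + (real j + 1) * \<eta>}. \<bar>Re (H t x)\<bar> \<ge> \<eta> ^ 3 / 2 ^ 7"
      using seven by blast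
    with that \<eta> show ?thesis
      by (intro subinterval_of_grid_cell[where n = 7]) auto
  qed
  ultimately show ?thesis
    by blast
qed
end
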